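(* Let $S\subseteq X$, $\psi:S\to Z$ be $C$-convex, $x_0\in S$ and $f=\psi^C$. Then the following three conditions on $x_0$ are equivalent: (i) $f(x_0)=Z$, or for all $x\in\operatorname{dom}f$ with $f(x)\ne f(x_0)$: $0\notin f'(x_0,x-x_0)$; (ii) $f(x_0)=Z$, or for all $x\in\operatorname{dom} f$ with $f(x)\ne f(x_0)$ there is $z^*\in C^-\setminus\{0\}$ with $0<\varphi'_{f,z^*}(x_0,x-x_0)$; (iii) for all $x\in\operatorname{dom}f$ with $f(x_0)\ne f(x)$ there is $z^*\in C^-\setminus\{0\}$ with $-\infty=\varphi_{f,z^*}(x_0)<\varphi_{f,z^*}(x)$ or $0<\varphi'_{f,z^*}(x_0,x-x_0)$. In particular, if for every $x\in S$ with $\psi(x)\ne\psi(x_0)$ there exists $z\in Z$ with $z\in\psi'(x_0,x-x_0)\setminus(-C)$, then $\psi(x_0)\in\operatorname{Eff}\psi[S]$.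
   Context: $X$ real linear space, $Z$ real locally convex Hausdorff space with dual $Z^*$, $C\subseteq Z$ closed convex cone, $0\in C$, $C^-=\{z^*:z^*(c)\le0\ \forall c\in C\}$, $C^-\setminus\{0\}\ne\emptyset$. $\psi:S\to Z$ is $C$-convex if $S$ is convex and $(1-t)\psi(x_1)+t\psi(x_2)\in\psi(x_1+t(x_2-x_1))+C$. $f=\psi^C$: $f(x)=\psi(x)+C$ for $x\in S$, $\emptyset$ otherwise; $\operatorname{dom}f=S$. $A\ominus B=\{z:B+\{z\}\subseteq A\}$; $f'(x,u)=\bigcap_{t_0>0}\operatorname{cl}\operatorname{co}\bigcup_{0<t<t_0}\frac1t(f(x+tu)\ominus f(x))$. $\varphi_{f,z^*}(x)=-z^*(\psi(x))$ for $x\in S$, $+\infty$ otherwise; on $\overline{\mathbb R}$: inf-addition $\dot+$ ($(-\infty)\dot+(+\infty)=+\infty$), $r\ominus s=\inf\{t\in\mathbb R:r\le s\dot+t\}$; $\varphi'_{f,z^*}(x,u)=\inf_{t>0}\frac1t(\varphi_{f,z^*}(x+tu)\ominus\varphi_{f,z^*}(x))$. $\psi(x_0)\in\operatorname{Eff}\psi[S]$: for all $y\in\psi[S]$, $\psi(x_0)\in y+C$ implies $\psi(x_0)\in y+(C\cap-C)$. Dini derivative $\psi'(x_0,v)$: the set of limits in $\tilde Z=Z\cup Z_\infty$ of $\frac1{t_i}(\psi(x_0+t_iv)-\psi(x_0))$ along sequences $t_i\downarrow0$, where $Z_\infty$ consists of infinite elements $z_\infty$ in direction $z$ ($z_\infty=y_\infty$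 iff $y=\lambda z$, $\lambda>0$; $0_\infty=0$), $\tilde Z$ topologized by neighborhood bases $z+U$ for $z\in Z$ and $(\{tz\}+\operatorname{cone}(U+\{z\}))\cup\{a_\infty: a\in (U+\{z\})\setminus\{0\}\}$ ($t>0$) for $z_\infty$, $z\ne0$, with $U$ closed convex balanced $0$-neighborhoods. *)

theory Defs
  imports "HOL-Analysis.Analysis" "HOL-Library.Extended_Real"
begin

text \<open>Z is a real locally convex Hausdorff topological vector space: Hausdorff comes
from the type class t2_space; the remaining axioms are this predicate.\<close>
definition lctvs :: "'z::{real_vector,t2_space} itself \<Rightarrow> bool" where
  "lctvs _ \<longleftrightarrow>
     continuous_on UNIV (\<lambda>p::'z \<times> 'z. fst p + snd p) \<and>
     continuous_on UNIV (\<lambda>p::real \<times> 'z. fst p *\<^sub>R snd p) \<and>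
     (\<forall>V::'z set. open V \<and> 0 \<in> V \<longrightarrow> (\<exists>U. open U \<and> convex U \<and> 0 \<in> U \<and> U \<subseteq> V))"

definition dualsp :: "('z::{real_vector,topological_space} \<Rightarrow> real) set" where
  "dualsp = {g. linear g \<and> continuous_on UNIV g}"

definition closed_convex_cone :: "'z::{real_vector,topological_space} set \<Rightarrow> bool" where
  "closed_convex_cone C \<longleftrightarrow> closed C \<and> convex C \<and> cone C"

definition negdual :: "'z::{real_vector,topological_space} set \<Rightarrow> ('z \<Rightarrow> real) set" where
  "negdual C = {g \<in> dualsp. \<forall>c\<in>C. g c \<le> 0}"

definition C_convex :: "'x::real_vector set \<Rightarrow> 'z::real_vector set \<Rightarrow> ('x \<Rightarrow> 'z) \<Rightarrow> bool" where
  "C_convex S C \<psi> \<longleftrightarrow> convex S \<and>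
     (\<forall>x1\<in>S. \<forall>x2\<in>S. \<forall>t::real. 0 \<le> t \<and> t \<le> 1 \<longrightarrow>
        (1 - t) *\<^sub>R \<psi> x1 + t *\<^sub>R \<psi> x2 \<in> {\<psi> (x1 + t *\<^sub>R (x2 - x1)) + c | c. c \<in> C})"

definition fC :: "'x::real_vector set \<Rightarrow> ('x \<Rightarrow> 'z::real_vector) \<Rightarrow> 'z set \<Rightarrow> 'x \<Rightarrow> 'z set" where
  "fC S \<psi> C x = (if x \<in> S then {\<psi> x + c | c. c \<in> C} else {})"

definition setminus_ominus :: "'z::real_vector set \<Rightarrow> 'z set \<Rightarrow> 'z set" where
  "setminus_ominus A B = {z. (\<lambda>b. b + z) ` B \<subseteq> A}"

definition setder :: "('x::real_vector \<Rightarrow> 'z::{real_vector,topological_space} set) \<Rightarrow> 'x \<Rightarrow> 'x \<Rightarrow> 'z set" where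
  "setder f x u = (\<Inter>t0\<in>{0<..}. closure (convex hull
      (\<Union>t\<in>{0<..<t0}. (\<lambda>z. (1 / t) *\<^sub>R z) ` setminus_ominus (f (x + t *\<^sub>R u)) (f x))))"

definition phiC :: "'x::real_vector set \<Rightarrow> ('x \<Rightarrow> 'z::real_vector) \<Rightarrow> ('z \<Rightarrow> real) \<Rightarrow> 'x \<Rightarrow> ereal" where
  "phiC S \<psi> g x = (if x \<in> S then ereal (- g (\<psi> x)) else \<infinity>)"

text \<open>inf-addition on the extended reals: (-inf) + (+inf) = +inf\<close>
definition inf_add :: "ereal \<Rightarrow> ereal \<Rightarrow> ereal" where
  "inf_add r s = (if r = \<infinity> \<or> s = \<infinity> then \<infinity> else r + s)"

definition ereal_ominus :: "ereal \<Rightarrow> ereal \<Rightarrow> ereal" where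
  "ereal_ominus r s = Inf {ereal t | t. r \<le> inf_add s (ereal t)}"

definition phider :: "('x::real_vector \<Rightarrow> ereal) \<Rightarrow> 'x \<Rightarrow> 'x \<Rightarrow> ereal" where
  "phider \<phi> x u = (INF t\<in>{0<..}. ereal (1 / t) * ereal_ominus (\<phi> (x + t *\<^sub>R u)) (\<phi> x))"

definition balanced_set :: "'z::real_vector set \<Rightarrow> bool" where
  "balanced_set U \<longleftrightarrow> (\<forall>a::real. \<bar>a\<bar> \<le> 1 \<longrightarrow> (\<lambda>u. a *\<^sub>R u) ` U \<subseteq> U)"

text \<open>Convergence in the extended space Z~ to a finite point z: every basic neighbourhood
  z + U (U closed convex balanced 0-neighbourhood) eventually contains the sequence.\<close>
definition tilde_conv_fin :: "(nat \<Rightarrow> 'z::{real_vector,topological_space}) \<Rightarrow> 'z \<Rightarrow> bool" where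
  "tilde_conv_fin q z \<longleftrightarrow>
     (\<forall>U. closed U \<and> convex U \<and> balanced_set U \<and> 0 \<in> interior U \<longrightarrow>
        (\<forall>\<^sub>F i in sequentially. q i \<in> (\<lambda>u. z + u) ` U))"

text \<open>Finite elements of the Dini derivative psi'(x0,v).\<close>
definition dini_fin :: "('x::real_vector \<Rightarrow> 'z::{real_vector,topological_space}) \<Rightarrow> 'x \<Rightarrow> 'x \<Rightarrow> 'z set" where
  "dini_fin \<psi> x0 v = {z. \<exists>t::nat \<Rightarrow> real. (\<forall>i. 0 < t i) \<and> decseq t \<and> t \<longlonglongrightarrow> 0 \<and>
      tilde_conv_fin (\<lambda>i. (1 / t i) *\<^sub>R (\<psi> (x0 + t i *\<^sub>R v) - \<psi> x0)) z}"

definition Eff_pt :: "'z::real_vector set \<Rightarrow> 'z set \<Rightarrow> 'z \<Rightarrow> bool" where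
  "Eff_pt C A y0 \<longleftrightarrow> y0 \<in> A \<and>
     (\<forall>y\<in>A. y0 \<in> {y + c | c. c \<in> C} \<longrightarrow> y0 \<in> {y + c | c. c \<in> C \<inter> uminus ` C})"

end

(*
  For u = x - x0 the sets (1/t) (f(x0 + t u) \<ominus> f(x0)) are (psi(x0 + t u) - psi(x0) + C) / t,
  or empty when x0 + t u is outside S.  If 0 is not in f'(x0,u), the closed convex hull of
  these sets for 0 < t < t0 misses 0, and Hahn-Banach separation in the locally convex
  space Z (via Zorn's lemma for sublinear functionals and a Minkowski functional) yields a
  continuous linear h that is >= 1 on it.  Being bounded below on the translates of C, h is
  nonnegative on C, so g = -h lies in C^- \ {0}; moreover h o psi is convex, so its
  difference quotients at x0 increase with t and are all >= 1, i.e. phi'_{f,g}(x0,u) >= 1.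
  Conversely, phi'_{f,g}(x0,u) > e > 0 puts all quotients into the closed half-space
  {g <= -e}, which misses 0.  Conditions (ii) and (iii) agree because f(x0) is not Z
  (C^- contains a nonzero functional) and phi_{f,g}(x0) is finite.

  For efficiency: if psi(x0) lies in psi(x) + C, then C-convexity puts every difference
  quotient of psi at x0 in direction x - x0 into -C, so every finite Dini derivative lies
  in the closed convex set -C, which the hypothesis excludes unless psi(x) = psi(x0).
*)

theory Submission
  imports Defs
begin

section \<open>Sublinear functionals and the Hahn-Banach theorem\<close>

definition sublinear :: "('a::real_vector \<Rightarrow> real) \<Rightarrow> bool" where
  "sublinear q \<longleftrightarrow> (\<forall>x y. q (x + y) \<le> q x + q y) \<and> (\<forall>a x. 0 \<le> a \<longrightarrow> q (a *\<^sub>R x) \<le> a * q x)"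

lemma sublinearI:
  assumes "\<And>x y. q (x + y) \<le> q x + q y" and "q 0 \<le> 0"
    and "\<And>a x. 0 < a \<Longrightarrow> q (a *\<^sub>R x) \<le> a * q x"
  shows "sublinear q"
  unfolding sublinear_def
proof (intro conjI allI impI)
  fix a :: real and x assume "0 \<le> a"
  then show "q (a *\<^sub>R x) \<le> a * q x"
    using assms by (cases "a = 0") auto
qed (use assms in auto)

lemma sublinear_add_le: "sublinear q \<Longrightarrow> q (x + y) \<le> q x + q y"
  unfolding sublinear_def by blast

lemma sublinear_scaleR_le: "sublinear q \<Longrightarrow> 0 \<le> a \<Longrightarrow> q (a *\<^sub>R x) \<le> a * q x"
  unfolding sublinear_def by blast

lemma sublinear_0:
  assumes "sublinear q"
  shows "q 0 = 0"
proof -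
  have "q (0 *\<^sub>R 0) \<le> 0 * q 0" and "q (0 + 0) \<le> q 0 + q 0"
    using assms unfolding sublinear_def by blast+
  then show ?thesis by simp
qed

lemma sublinear_scaleR:
  assumes q: "sublinear q" and a: "0 \<le> a"
  shows "q (a *\<^sub>R x) = a * q x"
proof (cases "a = 0")
  case True
  then show ?thesis using sublinear_0[OF q] by simp
next
  case False
  have "q ((1 / a) *\<^sub>R (a *\<^sub>R x)) \<le> (1 / a) * q (a *\<^sub>R x)"
    using sublinear_scaleR_le[OF q, of "1 / a" "a *\<^sub>R x"] a by simp
  then have "q x \<le> (1 / a) * q (a *\<^sub>R x)" using False by simp
  then have "a * q x \<le> q (a *\<^sub>R x)" using False a by (simp add: field_simps)
  then show ?thesis using sublinear_scaleR_le[OF q a, of x] by simp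
qed

lemma sublinear_neg_le: "sublinear q \<Longrightarrow> - q (- x) \<le> q x"
  using sublinear_add_le[of q x "- x"] sublinear_0[of q] by simp

definition ray_infimum :: "('a::real_vector \<Rightarrow> real) \<Rightarrow> 'a \<Rightarrow> real \<Rightarrow> 'a \<Rightarrow> real" where
  "ray_infimum q y c x = (INF t\<in>{0..}. q (x + t *\<^sub>R y) - t * c)"

lemma ray_infimum_greatest:
  "(\<And>t. 0 \<le> t \<Longrightarrow> b \<le> q (x + t *\<^sub>R y) - t * c) \<Longrightarrow> b \<le> ray_infimum q y c x"
  unfolding ray_infimum_def by (rule cINF_greatest) auto

context
  fixes q :: "'a::real_vector \<Rightarrow> real" and y :: 'a and c :: real
  assumes q: "sublinear q" and c_le: "c \<le> q y"
begin

lemma ray_infimum_le: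
  assumes t: "0 \<le> t"
  shows "ray_infimum q y c x \<le> q (x + t *\<^sub>R y) - t * c"
  unfolding ray_infimum_def
proof (rule cINF_lower)
  show "bdd_below ((\<lambda>t. q (x + t *\<^sub>R y) - t * c) ` {0..})"
  proof (rule bdd_belowI2)
    fix s :: real assume "s \<in> {0..}"
    then have "s * c \<le> q (s *\<^sub>R y)" using sublinear_scaleR[OF q] c_le by (simp add: mult_left_mono)
    also have "\<dots> \<le> q (x + s *\<^sub>R y) + q (- x)"
      using sublinear_add_le[OF q, of "x + s *\<^sub>R y" "- x"] by simp
    finally show "- q (- x) \<le> q (x + s *\<^sub>R y) - s * c" by simp
  qed
qed (use t in simp)

lemma sublinear_ray_infimum: "sublinear (ray_infimum q y c)"
proof (rule sublinearI)
  fix x1 x2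
  have "ray_infimum q y c (x1 + x2) - (q (x2 + t *\<^sub>R y) - t * c) \<le> ray_infimum q y c x1"
    if t: "0 \<le> t" for t
  proof (rule ray_infimum_greatest)
    fix r :: real assume r: "0 \<le> r"
    have "ray_infimum q y c (x1 + x2) \<le> q ((x1 + r *\<^sub>R y) + (x2 + t *\<^sub>R y)) - (r + t) * c"
      using ray_infimum_le[of "r + t" "x1 + x2"] r t by (simp add: algebra_simps)
    also have "\<dots> \<le> q (x1 + r *\<^sub>R y) + q (x2 + t *\<^sub>R y) - (r + t) * c"
      using sublinear_add_le[OF q] by simp
    finally show "ray_infimum q y c (x1 + x2) - (q (x2 + t *\<^sub>R y) - t * c) \<le> q (x1 + r *\<^sub>R y) - r * c"
      by (simp add: algebra_simps)
  qed
  then have "ray_infimum q y c (x1 + x2) - ray_infimum q y c x1 \<le> ray_infimum q y c x2"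
    by (intro ray_infimum_greatest) (simp add: algebra_simps)
  then show "ray_infimum q y c (x1 + x2) \<le> ray_infimum q y c x1 + ray_infimum q y c x2"
    by simp
next
  show "ray_infimum q y c 0 \<le> 0"
    using ray_infimum_le[of 0 0] sublinear_0[OF q] by simp
next
  fix a :: real and x assume a: "0 < a"
  have "ray_infimum q y c (a *\<^sub>R x) / a \<le> ray_infimum q y c x"
  proof (rule ray_infimum_greatest)
    fix t :: real assume t: "0 \<le> t"
    have "ray_infimum q y c (a *\<^sub>R x) \<le> q (a *\<^sub>R (x + t *\<^sub>R y)) - (a * t) * c"
      using ray_infimum_le[of "a * t" "a *\<^sub>R x"] a t by (simp add: scaleR_add_right)
    also have "\<dots> = a * (q (x + t *\<^sub>R y) - t * c)"
      using sublinear_scaleR[OF q, of a "x + t *\<^sub>R y"] a by (simp add: algebra_simps)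
    finally show "ray_infimum q y c (a *\<^sub>R x) / a \<le> q (x + t *\<^sub>R y) - t * c"
      using a by (simp add: field_simps)
  qed
  then show "ray_infimum q y c (a *\<^sub>R x) \<le> a * ray_infimum q y c x"
    using a by (simp add: field_simps)
qed

lemma ray_infimum_le_self: "ray_infimum q y c x \<le> q x"
  using ray_infimum_le[of 0 x] by simp

lemma ray_infimum_neg: "ray_infimum q y c (- y) \<le> - c"
  using ray_infimum_le[of 1 "- y"] sublinear_0[OF q] by simp

end

lemma sublinear_minimal_imp_linear:
  assumes q: "sublinear q" and minimal: "\<And>q'. sublinear q' \<Longrightarrow> q' \<le> q \<Longrightarrow> q' = q"
  shows "linear q"
proof -
  have add: "q (x + y) = q x + q y" for x y
  proof -
    have "ray_infimum q y (q y) = q"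
      by (intro minimal sublinear_ray_infimum[OF q] le_funI ray_infimum_le_self[OF q]) simp_all
    then have "q x \<le> q (x + 1 *\<^sub>R y) - 1 * q y"
      using ray_infimum_le[OF q order.refl, where y = y and t = 1 and x = x] by simp
    then show ?thesis using sublinear_add_le[OF q, of x y] by simp
  qed
  have neg: "q (- x) = - q x" for x
    using add[of x "- x"] sublinear_0[OF q] by simp
  have "q (a *\<^sub>R x) = a * q x" for a x
  proof (cases "0 \<le> a")
    case True
    then show ?thesis by (rule sublinear_scaleR[OF q])
  next
    case False
    then have "q ((- a) *\<^sub>R x) = (- a) * q x" by (intro sublinear_scaleR[OF q]) simp
    then show ?thesis using neg[of "a *\<^sub>R x"] by simp
  qed
  then show ?thesis using add by (intro linearI) simp_all
qed

lemma sublinear_INF_chain: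
  assumes nonempty: "Q \<noteq> {}" and Q: "\<And>q. q \<in> Q \<Longrightarrow> sublinear q \<and> q \<le> p"
    and chain: "\<And>q q'. q \<in> Q \<Longrightarrow> q' \<in> Q \<Longrightarrow> q \<le> q' \<or> q' \<le> q"
  shows "sublinear (\<lambda>x. INF q\<in>Q. q x)" and "\<And>q. q \<in> Q \<Longrightarrow> (\<lambda>x. INF q\<in>Q. q x) \<le> q"
proof -
  have lower: "(INF q\<in>Q. q x) \<le> q x" if "q \<in> Q" for q x
  proof (rule cINF_lower[OF bdd_belowI2 that])
    fix q' assume "q' \<in> Q"
    then have "- p (- x) \<le> - q' (- x)" "- q' (- x) \<le> q' x"
      using Q sublinear_neg_le by (auto simp: le_fun_def)
    then show "- p (- x) \<le> q' x" by linarith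
  qed
  then show "(\<lambda>x. INF q\<in>Q. q x) \<le> q" if "q \<in> Q" for q
    using that by (simp add: le_fun_def)
  have greatest: "b \<le> (INF q\<in>Q. q x)" if "\<And>q. q \<in> Q \<Longrightarrow> b \<le> q x" for b x
    using nonempty that by (rule cINF_greatest)
  show "sublinear (\<lambda>x. INF q\<in>Q. q x)"
  proof (rule sublinearI)
    fix x y
    have "(INF q\<in>Q. q (x + y)) - q2 y \<le> (INF q\<in>Q. q x)" if q2: "q2 \<in> Q" for q2
    proof (rule greatest)
      fix q1 assume q1: "q1 \<in> Q"
      obtain m where m: "m \<in> Q" "m \<le> q1" "m \<le> q2"
        using chain[OF q1 q2] q1 q2 by auto
      have "(INF q\<in>Q. q (x + y)) \<le> m (x + y)" by (rule lower[OF m(1)])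
      also have "\<dots> \<le> m x + m y" using Q[OF m(1)] by (simp add: sublinear_add_le)
      also have "\<dots> \<le> q1 x + q2 y" using m by (simp add: add_mono le_fun_def)
      finally show "(INF q\<in>Q. q (x + y)) - q2 y \<le> q1 x" by simp
    qed
    then have "(INF q\<in>Q. q (x + y)) - (INF q\<in>Q. q x) \<le> (INF q\<in>Q. q y)"
      by (intro greatest) (simp add: algebra_simps)
    then show "(INF q\<in>Q. q (x + y)) \<le> (INF q\<in>Q. q x) + (INF q\<in>Q. q y)" by simp
  next
    obtain q where q: "q \<in> Q" using nonempty by blast
    then have "sublinear q" using Q by blast
    then show "(INF q\<in>Q. q 0) \<le> 0" using lower[OF q, of 0] sublinear_0[of q] by simp
  next
    fix a :: real and x assume a: "0 < a"
    have "(INF q\<in>Q. q (a *\<^sub>R x)) / a \<le> (INF q\<in>Q. q x)"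
    proof (rule greatest)
      fix q assume q: "q \<in> Q"
      have "(INF q\<in>Q. q (a *\<^sub>R x)) \<le> a * q x"
        using lower[OF q, of "a *\<^sub>R x"] sublinear_scaleR[of q a x] Q[OF q] a by simp
      then show "(INF q\<in>Q. q (a *\<^sub>R x)) / a \<le> q x" using a by (simp add: field_simps)
    qed
    then show "(INF q\<in>Q. q (a *\<^sub>R x)) \<le> a * (INF q\<in>Q. q x)" using a by (simp add: field_simps)
  qed
qed

lemma sublinear_dominating_linear:
  assumes p: "sublinear p"
  shows "\<exists>L. linear L \<and> (\<forall>x. L x \<le> p x)"
proof -
  define P where "P = {q. sublinear q \<and> q \<le> p}"
  have "\<exists>m\<in>P. \<forall>q\<in>P. q \<le> m \<longrightarrow> q = m"
  proof (rule predicate_Zorn)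
    show "partial_order_on P (relation_of (\<lambda>q q'. q' \<le> q) P)"
      by (rule partial_order_on_relation_ofI) auto
  next
    fix Q assume "Q \<in> Chains (relation_of (\<lambda>q q'. q' \<le> q) P)"
    then have QP: "Q \<subseteq> P" and chain: "\<And>q q'. q \<in> Q \<Longrightarrow> q' \<in> Q \<Longrightarrow> q \<le> q' \<or> q' \<le> q"
      unfolding Chains_def relation_of_def by auto
    show "\<exists>u\<in>P. \<forall>q\<in>Q. u \<le> q"
    proof (cases "Q = {}")
      case True
      then show ?thesis using p unfolding P_def by auto
    next
      case False
      then obtain q0 where q0: "q0 \<in> Q" by blast
      have Q_dominated: "sublinear q \<and> q \<le> p" if "q \<in> Q" for q
        using QP that unfolding P_def by blast
      have INF_sublinear: "sublinear (\<lambda>x. INF q\<in>Q. q x)"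
        and INF_le: "\<And>q. q \<in> Q \<Longrightarrow> (\<lambda>x. INF q\<in>Q. q x) \<le> q"
        using sublinear_INF_chain[of Q p] False Q_dominated chain by blast+
      have "(\<lambda>x. INF q\<in>Q. q x) \<le> p"
        using INF_le[OF q0] Q_dominated[OF q0] by (blast intro: order.trans)
      then show ?thesis using INF_sublinear INF_le unfolding P_def by blast
    qed
  qed
  then obtain m where m: "m \<in> P" and minimal: "\<And>q. q \<in> P \<Longrightarrow> q \<le> m \<Longrightarrow> q = m"
    by blast
  have "linear m"
  proof (rule sublinear_minimal_imp_linear)
    show "sublinear m" using m unfolding P_def by simp
    fix q assume q: "sublinear q" "q \<le> m"
    moreover have "m \<le> p" using m unfolding P_def by simp
    ultimately have "q \<in> P" unfolding P_def using order.trans by blast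
    then show "q = m" using minimal q(2) by blast
  qed
  then show ?thesis using m unfolding P_def by (auto simp: le_fun_def)
qed

lemma sublinear_dominating_linear_eq_at:
  assumes p: "sublinear p"
  shows "\<exists>L. linear L \<and> (\<forall>x. L x \<le> p x) \<and> L y = p y"
proof -
  obtain L where L: "linear L" "\<And>x. L x \<le> ray_infimum p y (p y) x"
    using sublinear_dominating_linear[OF sublinear_ray_infimum[OF p order.refl]] by blast
  have dom: "L x \<le> p x" for x
    using L(2)[of x] ray_infimum_le_self[OF p order.refl, of y x] by linarith
  have "- L y \<le> - p y"
    using L(2)[of "- y"] ray_infimum_neg[OF p order.refl, where y = y] linear_neg[OF L(1), of y]
    by linarith
  then show ?thesis using L(1) dom[of y] dom by (intro exI[of _ L]) simp
qed

section \<open>Separation in locally convex spaces\<close>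

lemma lctvs_continuous_on_affine:
  assumes "lctvs TYPE('z::{real_vector,t2_space})"
  shows "continuous_on UNIV (\<lambda>w::'z. a *\<^sub>R w + b)"
proof -
  have add: "continuous_on UNIV (\<lambda>p::'z \<times> 'z. fst p + snd p)"
    and mult: "continuous_on UNIV (\<lambda>p::real \<times> 'z. fst p *\<^sub>R snd p)"
    using assms unfolding lctvs_def by blast+
  have "continuous_on UNIV ((\<lambda>p::real \<times> 'z. fst p *\<^sub>R snd p) \<circ> (\<lambda>w. (a, w)))"
    by (intro continuous_on_compose continuous_intros continuous_on_subset[OF mult]) simp
  then have "continuous_on UNIV ((\<lambda>p::'z \<times> 'z. fst p + snd p) \<circ> (\<lambda>w. (a *\<^sub>R w, b)))"
    by (intro continuous_on_compose continuous_intros continuous_on_subset[OF add])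
      (simp_all add: o_def)
  then show ?thesis by (simp add: o_def)
qed

lemma lctvs_open_affine_vimage:
  assumes "lctvs TYPE('z::{real_vector,t2_space})" and "open (B::'z set)"
  shows "open {w. a *\<^sub>R w + b \<in> B}"
  using open_vimage[OF assms(2) lctvs_continuous_on_affine[OF assms(1)]] by (simp add: vimage_def)

lemma lctvs_scaleR_near:
  assumes Z: "lctvs TYPE('z::{real_vector,t2_space})" and W: "open (W::'z set)"
    and s0: "s0 *\<^sub>R x \<in> W"
  obtains e where "e > 0" "\<And>s. \<bar>s - s0\<bar> < e \<Longrightarrow> s *\<^sub>R x \<in> W"
proof -
  have mult: "continuous_on UNIV (\<lambda>p::real \<times> 'z. fst p *\<^sub>R snd p)"
    using Z unfolding lctvs_def by blast
  have "continuous_on UNIV ((\<lambda>p::real \<times> 'z. fst p *\<^sub>R snd p) \<circ> (\<lambda>s. (s, x)))"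
    by (intro continuous_on_compose continuous_intros continuous_on_subset[OF mult]) simp
  then have "open ((\<lambda>s::real. s *\<^sub>R x) -` W)"
    by (intro open_vimage[OF W]) (simp add: o_def)
  then obtain e where "e > 0" "\<And>s. dist s s0 < e \<Longrightarrow> s \<in> (\<lambda>s::real. s *\<^sub>R x) -` W"
    using s0 unfolding open_dist by blast
  then show ?thesis using that by (auto simp: dist_real_def)
qed

lemma lctvs_open_absorbing:
  assumes Z: "lctvs TYPE('z::{real_vector,t2_space})" and W: "open (W::'z set)" "0 \<in> W"
  shows "\<exists>t>0. (1 / t) *\<^sub>R x \<in> W"
proof -
  obtain e where e: "e > 0" "\<And>s. \<bar>s - 0\<bar> < e \<Longrightarrow> s *\<^sub>R x \<in> W"
    using lctvs_scaleR_near[OF Z W(1), of 0 x] W(2) by auto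
  have "(1 / (2 / e)) *\<^sub>R x \<in> W" using e by simp
  then show ?thesis using e(1) by (intro exI[of _ "2 / e"]) simp
qed

definition minkowski_functional :: "'a::real_vector set \<Rightarrow> 'a \<Rightarrow> real" where
  "minkowski_functional W x = Inf {t. 0 < t \<and> (1 / t) *\<^sub>R x \<in> W}"

lemma minkowski_functional_le:
  "0 < t \<Longrightarrow> (1 / t) *\<^sub>R x \<in> W \<Longrightarrow> minkowski_functional W x \<le> t"
  unfolding minkowski_functional_def by (rule cInf_lower) (auto intro: bdd_belowI[of _ 0])

lemma minkowski_functional_greatest:
  "\<exists>t>0. (1 / t) *\<^sub>R x \<in> W \<Longrightarrow> (\<And>t. 0 < t \<Longrightarrow> (1 / t) *\<^sub>R x \<in> W \<Longrightarrow> b \<le> t)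
    \<Longrightarrow> b \<le> minkowski_functional W x"
  unfolding minkowski_functional_def by (rule cInf_greatest) auto

lemma sublinear_minkowski_functional:
  assumes W: "convex W" "0 \<in> W" and absorbing: "\<And>x. \<exists>t>0. (1 / t) *\<^sub>R x \<in> W"
  shows "sublinear (minkowski_functional W)"
proof (rule sublinearI)
  fix x y
  have "minkowski_functional W (x + y) - t \<le> minkowski_functional W x"
    if t: "0 < t" "(1 / t) *\<^sub>R y \<in> W" for t
  proof (rule minkowski_functional_greatest[OF absorbing])
    fix s assume s: "0 < s" "(1 / s) *\<^sub>R x \<in> W"
    have "(s / (s + t)) *\<^sub>R ((1 / s) *\<^sub>R x) + (t / (s + t)) *\<^sub>R ((1 / t) *\<^sub>R y) \<in> W"
      using s t by (intro convexD[OF W(1)]) (simp_all add: add_divide_distrib[symmetric])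
    moreover have "(s / (s + t)) *\<^sub>R ((1 / s) *\<^sub>R x) + (t / (s + t)) *\<^sub>R ((1 / t) *\<^sub>R y)
        = (1 / (s + t)) *\<^sub>R (x + y)"
      using s t by (simp add: scaleR_add_right)
    ultimately have "minkowski_functional W (x + y) \<le> s + t"
      using s t by (intro minkowski_functional_le) simp_all
    then show "minkowski_functional W (x + y) - t \<le> s" by simp
  qed
  then have "minkowski_functional W (x + y) - minkowski_functional W x \<le> minkowski_functional W y"
    by (intro minkowski_functional_greatest[OF absorbing]) (simp add: algebra_simps)
  then show "minkowski_functional W (x + y) \<le> minkowski_functional W x + minkowski_functional W y"
    by simp
next
  have "minkowski_functional W 0 \<le> 0 + e" if "0 < e" for e
    using minkowski_functional_le[of e 0 W] that W(2) by simp
  then show "minkowski_functional W 0 \<le> 0" by (rule field_le_epsilon)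
next
  fix a :: real and x assume a: "0 < a"
  have "minkowski_functional W (a *\<^sub>R x) / a \<le> minkowski_functional W x"
  proof (rule minkowski_functional_greatest[OF absorbing])
    fix t assume t: "0 < t" "(1 / t) *\<^sub>R x \<in> W"
    then have "minkowski_functional W (a *\<^sub>R x) \<le> a * t"
      using a by (intro minkowski_functional_le) simp_all
    then show "minkowski_functional W (a *\<^sub>R x) / a \<le> t" using a by (simp add: field_simps)
  qed
  then show "minkowski_functional W (a *\<^sub>R x) \<le> a * minkowski_functional W x"
    using a by (simp add: field_simps)
qed

lemma minkowski_functional_less_one:
  assumes Z: "lctvs TYPE('z::{real_vector,t2_space})" and W: "open (W::'z set)" and x: "x \<in> W"
  shows "minkowski_functional W x < 1"
proof -
  obtain e where e: "e > 0" "\<And>s. \<bar>s - 1\<bar> < e \<Longrightarrow> s *\<^sub>R x \<in> W"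
    using lctvs_scaleR_near[OF Z W, of 1 x] x by auto
  have "minkowski_functional W x \<le> 1 / (1 + e / 2)"
    using e by (intro minkowski_functional_le) auto
  also have "\<dots> < 1" using e(1) by simp
  finally show ?thesis .
qed

lemma one_le_minkowski_functional:
  assumes W: "convex W" "0 \<in> W" and absorbing: "\<And>x. \<exists>t>0. (1 / t) *\<^sub>R x \<in> W"
    and k: "k \<notin> W"
  shows "1 \<le> minkowski_functional W k"
proof (rule minkowski_functional_greatest[OF absorbing])
  fix t assume t: "0 < t" "(1 / t) *\<^sub>R k \<in> W"
  show "1 \<le> t"
  proof (rule ccontr)
    assume "\<not> 1 \<le> t"
    then have "(1 - t) *\<^sub>R 0 + t *\<^sub>R ((1 / t) *\<^sub>R k) \<in> W"
      using t W by (intro convexD_alt) auto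
    then show False using t k by simp
  qed
qed

lemma lctvs_linear_continuous_on:
  assumes Z: "lctvs TYPE('z::{real_vector,t2_space})" and L: "linear (L :: 'z \<Rightarrow> real)"
    and W: "open W" "0 \<in> W" and bound: "\<And>x. x \<in> W \<Longrightarrow> L x < 1"
  shows "continuous_on UNIV L"
  unfolding continuous_on_topological
proof (intro ballI allI impI)
  fix y and B :: "real set" assume "open B" "L y \<in> B"
  then obtain e where e: "e > 0" "\<And>r. dist r (L y) < e \<Longrightarrow> r \<in> B"
    unfolding open_dist by blast
  define A where "A = {z. (1 / e) *\<^sub>R z + (- (1 / e) *\<^sub>R y) \<in> W}
      \<inter> {z. (- 1 / e) *\<^sub>R z + ((1 / e) *\<^sub>R y) \<in> W}"
  have "open A" unfolding A_def by (intro open_Int lctvs_open_affine_vimage[OF Z W(1)])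
  moreover have "y \<in> A" unfolding A_def using W(2) by (simp add: scaleR_left_diff_distrib)
  moreover have "L z \<in> B" if "z \<in> A" for z
  proof -
    have "L ((1 / e) *\<^sub>R z + (- (1 / e) *\<^sub>R y)) < 1" "L ((- 1 / e) *\<^sub>R z + ((1 / e) *\<^sub>R y)) < 1"
      using that bound unfolding A_def by blast+
    then have "(L z - L y) / e < 1" "(L y - L z) / e < 1"
      by (simp_all add: linear_diff[OF L] linear_scale[OF L] diff_divide_distrib)
    then have "dist (L z) (L y) < e" using e(1) by (simp add: dist_real_def abs_less_iff)
    then show ?thesis by (rule e(2))
  qed
  ultimately show "\<exists>A. open A \<and> y \<in> A \<and> (\<forall>z\<in>UNIV. z \<in> A \<longrightarrow> L z \<in> B)" by blast
qed

lemma lctvs_separate_open_convex_point: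
  fixes W :: "'z::{real_vector,t2_space} set"
  assumes Z: "lctvs TYPE('z)"
    and W: "open W" "convex W" "0 \<in> W" and k: "k \<notin> W"
  obtains L :: "'z \<Rightarrow> real"
  where "linear L" "continuous_on UNIV L" "\<And>x. x \<in> W \<Longrightarrow> L x < 1" "1 \<le> L k"
proof -
  have absorbing: "\<exists>t>0. (1 / t) *\<^sub>R x \<in> W" for x by (rule lctvs_open_absorbing[OF Z W(1,3)])
  obtain L where L: "linear L" "\<And>x. L x \<le> minkowski_functional W x"
    and Lk: "L k = minkowski_functional W k"
    using sublinear_dominating_linear_eq_at[OF sublinear_minkowski_functional[OF W(2,3) absorbing]]
    by blast
  have less: "L x < 1" if "x \<in> W" for x
    using L(2)[of x] minkowski_functional_less_one[OF Z W(1) that] by linarith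
  show ?thesis
  proof (rule that[of L])
    show "continuous_on UNIV L" by (rule lctvs_linear_continuous_on[OF Z L(1) W(1,3) less])
    show "1 \<le> L k" using Lk one_le_minkowski_functional[OF W(2,3) absorbing k] by simp
  qed (use L(1) less in auto)
qed

lemma lctvs_Minkowski_difference_open_convex:
  fixes U K :: "'z::{real_vector,t2_space} set"
  assumes Z: "lctvs TYPE('z)" and U: "open U" "convex U" and K: "convex K"
  shows "open {z. \<exists>k\<in>K. z + k \<in> U}" and "convex {z. \<exists>k\<in>K. z + k \<in> U}"
proof -
  have "open {z. 1 *\<^sub>R z + k \<in> U}" for k by (rule lctvs_open_affine_vimage[OF Z U(1)])
  then have "open (\<Union>k\<in>K. {z. z + k \<in> U})" by (intro open_UN) simp
  moreover have "{z. \<exists>k\<in>K. z + k \<in> U} = (\<Union>k\<in>K. {z. z + k \<in> U})" by auto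
  ultimately show "open {z. \<exists>k\<in>K. z + k \<in> U}" by simp
  show "convex {z. \<exists>k\<in>K. z + k \<in> U}"
  proof (rule convexI)
    fix x y and u v :: real assume "x \<in> {z. \<exists>k\<in>K. z + k \<in> U}" "y \<in> {z. \<exists>k\<in>K. z + k \<in> U}"
      and uv: "0 \<le> u" "0 \<le> v" "u + v = 1"
    then obtain k1 k2 where k: "k1 \<in> K" "x + k1 \<in> U" "k2 \<in> K" "y + k2 \<in> U" by blast
    have "u *\<^sub>R k1 + v *\<^sub>R k2 \<in> K" using k uv by (intro convexD[OF K]) auto
    moreover have "u *\<^sub>R (x + k1) + v *\<^sub>R (y + k2) \<in> U" using k uv by (intro convexD[OF U(2)]) auto
    ultimately show "u *\<^sub>R x + v *\<^sub>R y \<in> {z. \<exists>k\<in>K. z + k \<in> U}"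
      by (intro CollectI bexI[of _ "u *\<^sub>R k1 + v *\<^sub>R k2"]) (simp_all add: algebra_simps)
  qed
qed

lemma lctvs_separate_convex_from_nbhd:
  fixes K :: "'z::{real_vector,t2_space} set"
  assumes Z: "lctvs TYPE('z)" and K: "convex K" and V: "open V" "0 \<in> V" "V \<inter> K = {}"
  obtains h :: "'z \<Rightarrow> real" where "linear h" "continuous_on UNIV h" "\<And>k. k \<in> K \<Longrightarrow> 1 \<le> h k"
proof (cases "K = {}")
  case True
  then show ?thesis using that[of "\<lambda>_. 0"] by (auto intro: linear_zero)
next
  case False
  then obtain k0 where k0: "k0 \<in> K" by auto
  obtain U where U: "open U" "convex U" "0 \<in> U" "U \<subseteq> V"
    using Z V unfolding lctvs_def by blast
  \<comment> \<open>Separate \<open>k0\<close> from \<open>W = U - K + k0\<close>; as \<open>\<epsilon> k0 \<in> U\<close>, the functional is then \<open>\<ge> \<epsilon>\<close> on \<open>K\<close>.\<close>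
  define W where "W = {z. \<exists>k\<in>(+) (- k0) ` K. z + k \<in> U}"
  have W_iff: "z \<in> W \<longleftrightarrow> (\<exists>k\<in>K. z + k - k0 \<in> U)" for z
    unfolding W_def by (auto simp: algebra_simps)
  have W_open: "open W" and W_convex: "convex W"
    unfolding W_def using lctvs_Minkowski_difference_open_convex[OF Z U(1,2) convex_translation[OF K]]
    by blast+
  have W_0: "0 \<in> W" unfolding W_iff using k0 U(3) by (intro bexI[of _ k0]) simp_all
  have k0_W: "k0 \<notin> W" unfolding W_iff using U(4) V(3) by auto
  obtain L :: "'z \<Rightarrow> real"
    where L: "linear L" "continuous_on UNIV L" "\<And>x. x \<in> W \<Longrightarrow> L x < 1"
    and Lk0: "1 \<le> L k0"
    using lctvs_separate_open_convex_point[OF Z W_open W_convex W_0 k0_W] by blast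
  obtain e where e: "e > 0" "\<And>s. \<bar>s - 0\<bar> < e \<Longrightarrow> s *\<^sub>R k0 \<in> U"
    using lctvs_scaleR_near[OF Z U(1), of 0 k0] U(3) by auto
  define \<epsilon> where "\<epsilon> = e / 2"
  have \<epsilon>: "0 < \<epsilon>" "\<epsilon> *\<^sub>R k0 \<in> U" using e unfolding \<epsilon>_def by auto
  have "\<epsilon> \<le> L k" if k: "k \<in> K" for k
  proof -
    have "\<epsilon> *\<^sub>R k0 - k + k0 \<in> W" unfolding W_iff using k \<epsilon> by (intro bexI[of _ k]) simp_all
    then have "L (\<epsilon> *\<^sub>R k0 - k + k0) < 1" by (rule L(3))
    then have "\<epsilon> * L k0 - L k + L k0 < 1"
      by (simp add: linear_add[OF L(1)] linear_diff[OF L(1)] linear_scale[OF L(1)])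
    moreover have "\<epsilon> \<le> \<epsilon> * L k0" using Lk0 \<epsilon> by simp
    ultimately show ?thesis using Lk0 by linarith
  qed
  moreover have "linear (\<lambda>x. L x / \<epsilon>)"
    by (rule linearI) (simp_all add: linear_add[OF L(1)] linear_scale[OF L(1)] add_divide_distrib)
  ultimately show ?thesis
    using \<epsilon>(1) L(2) by (intro that[of "\<lambda>x. L x / \<epsilon>"]) (auto intro!: continuous_intros)
qed

section \<open>Cones, \<open>C\<close>-convexity and directional derivatives\<close>

lemma closed_convex_cone_imp_convex_cone:
  "closed_convex_cone C \<Longrightarrow> 0 \<in> C \<Longrightarrow> convex_cone C"
  unfolding closed_convex_cone_def convex_cone_def conic_def cone_def by auto

lemma linear_nonneg_on_cone_if_bdd_below:
  fixes h :: "'a::real_vector \<Rightarrow> real"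
  assumes h: "linear h" and C: "convex_cone C" and bdd: "\<And>c. c \<in> C \<Longrightarrow> b \<le> h c"
    and c: "c \<in> C"
  shows "0 \<le> h c"
proof (rule ccontr)
  assume "\<not> 0 \<le> h c"
  then have hc: "h c < 0" by simp
  define r where "r = (\<bar>b\<bar> + 1) / - h c"
  have "0 \<le> r" using hc unfolding r_def by (simp add: divide_nonneg_neg)
  then have "b \<le> h (r *\<^sub>R c)" by (intro bdd convex_cone_scaleR[OF C _ c])
  also have "h (r *\<^sub>R c) = - (\<bar>b\<bar> + 1)"
    using hc unfolding r_def linear_scale[OF h] by (simp add: field_simps)
  finally show False by linarith
qed

lemma convex_add_scaleR_diff_mem:
  "convex S \<Longrightarrow> x \<in> S \<Longrightarrow> y \<in> S \<Longrightarrow> 0 \<le> t \<Longrightarrow> t \<le> 1 \<Longrightarrow> x + t *\<^sub>R (y - x) \<in> S"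
  using convexD_alt[of S x y t] by (simp add: algebra_simps)

lemma C_convexD:
  "C_convex S C \<psi> \<Longrightarrow> x1 \<in> S \<Longrightarrow> x2 \<in> S \<Longrightarrow> 0 \<le> t \<Longrightarrow> t \<le> 1 \<Longrightarrow>
    \<exists>c\<in>C. (1 - t) *\<^sub>R \<psi> x1 + t *\<^sub>R \<psi> x2 = \<psi> (x1 + t *\<^sub>R (x2 - x1)) + c"
  unfolding C_convex_def by blast

lemma C_convex_scalarization_convex_on:
  assumes psi: "C_convex S C \<psi>" and h: "linear h" and h_C: "\<And>c. c \<in> C \<Longrightarrow> 0 \<le> h c"
  shows "convex_on S (\<lambda>x. h (\<psi> x))"
proof (rule convex_onI)
  show "convex S" using psi unfolding C_convex_def by simp
  fix t :: real and x y assume t: "0 < t" "t < 1" and xy: "x \<in> S" "y \<in> S"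
  obtain c where "c \<in> C" and c: "(1 - t) *\<^sub>R \<psi> x + t *\<^sub>R \<psi> y = \<psi> (x + t *\<^sub>R (y - x)) + c"
    using C_convexD[OF psi xy, of t] t by auto
  then have "h (\<psi> (x + t *\<^sub>R (y - x))) \<le> h ((1 - t) *\<^sub>R \<psi> x + t *\<^sub>R \<psi> y)"
    using h_C by (simp add: linear_add[OF h])
  moreover have "x + t *\<^sub>R (y - x) = (1 - t) *\<^sub>R x + t *\<^sub>R y" by (simp add: algebra_simps)
  ultimately show "h (\<psi> ((1 - t) *\<^sub>R x + t *\<^sub>R y)) \<le> (1 - t) * h (\<psi> x) + t * h (\<psi> y)"
    by (simp add: linear_add[OF h] linear_scale[OF h])
qed

lemma convex_on_difference_quotient_mono:
  assumes F: "convex_on S F" and x0: "x0 \<in> S" and xt: "x0 + t *\<^sub>R u \<in> S"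
    and s: "0 < s" "s \<le> t"
  shows "(F (x0 + s *\<^sub>R u) - F x0) / s \<le> (F (x0 + t *\<^sub>R u) - F x0) / t"
proof -
  define r where "r = s / t"
  have r: "0 < r" "r \<le> 1" "r * t = s" using s unfolding r_def by auto
  have "x0 + s *\<^sub>R u = (1 - r) *\<^sub>R x0 + r *\<^sub>R (x0 + t *\<^sub>R u)"
    by (simp add: algebra_simps flip: r(3))
  then have "F (x0 + s *\<^sub>R u) \<le> (1 - r) * F x0 + r * F (x0 + t *\<^sub>R u)"
    using convex_onD[OF F _ r(2) x0 xt] r(1) by simp
  then have "(F (x0 + s *\<^sub>R u) - F x0) / s \<le> r * (F (x0 + t *\<^sub>R u) - F x0) / s"
    using s(1) by (intro divide_right_mono) (simp_all add: algebra_simps)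
  also have "\<dots> = (F (x0 + t *\<^sub>R u) - F x0) / t"
    using s r(1) by (simp flip: r(3))
  finally show ?thesis .
qed

lemma convex_on_difference_quotient_ge:
  assumes F: "convex_on S F" and x0: "x0 \<in> S" and t0: "0 < t0"
    and small: "\<And>s. 0 < s \<Longrightarrow> s < t0 \<Longrightarrow> x0 + s *\<^sub>R u \<in> S \<Longrightarrow> b \<le> (F (x0 + s *\<^sub>R u) - F x0) / s"
    and t: "0 < t" and xt: "x0 + t *\<^sub>R u \<in> S"
  shows "b \<le> (F (x0 + t *\<^sub>R u) - F x0) / t"
proof -
  define s where "s = min t (t0 / 2)"
  have s: "0 < s" "s \<le> t" "s < t0" using t t0 unfolding s_def by auto
  have "x0 + (s / t) *\<^sub>R ((x0 + t *\<^sub>R u) - x0) \<in> S"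
    using convex_add_scaleR_diff_mem[OF convex_on_imp_convex[OF F] x0 xt, of "s / t"] s t by simp
  then have "x0 + s *\<^sub>R u \<in> S" using t by simp
  then have "b \<le> (F (x0 + s *\<^sub>R u) - F x0) / s" using s by (intro small)
  also have "\<dots> \<le> (F (x0 + t *\<^sub>R u) - F x0) / t"
    by (rule convex_on_difference_quotient_mono[OF F x0 xt s(1,2)])
  finally show ?thesis .
qed

lemma fC_self:
  "x \<in> S \<Longrightarrow> 0 \<in> C \<Longrightarrow> \<psi> x \<in> fC S \<psi> C x"
  unfolding fC_def by force

lemma setminus_ominus_fC:
  assumes C: "convex_cone C" and x0: "x0 \<in> S"
  shows "setminus_ominus (fC S \<psi> C y) (fC S \<psi> C x0)
    = (if y \<in> S then {\<psi> y - \<psi> x0 + c | c. c \<in> C} else {})"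
proof (intro set_eqI iffI)
  fix w assume "w \<in> setminus_ominus (fC S \<psi> C y) (fC S \<psi> C x0)"
  then have "\<psi> x0 + w \<in> fC S \<psi> C y"
    using fC_self[OF x0 convex_cone_contains_0[OF C]] unfolding setminus_ominus_def by blast
  then obtain c where "y \<in> S" "c \<in> C" "\<psi> x0 + w = \<psi> y + c"
    unfolding fC_def by (auto split: if_splits)
  then have "y \<in> S" "c \<in> C" "w = \<psi> y - \<psi> x0 + c" by (simp_all add: algebra_simps)
  then show "w \<in> (if y \<in> S then {\<psi> y - \<psi> x0 + c | c. c \<in> C} else {})" by auto
next
  fix w assume "w \<in> (if y \<in> S then {\<psi> y - \<psi> x0 + c | c. c \<in> C} else {})"
  then obtain c where y: "y \<in> S" and c: "c \<in> C" and w: "w = \<psi> y - \<psi> x0 + c"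
    by (auto split: if_splits)
  have "b + w \<in> fC S \<psi> C y" if "b \<in> fC S \<psi> C x0" for b
  proof -
    obtain c' where "c' \<in> C" "b = \<psi> x0 + c'" using \<open>b \<in> fC S \<psi> C x0\<close> x0 unfolding fC_def by auto
    then have "c + c' \<in> C" "b + w = \<psi> y + (c + c')"
      using convex_cone_add[OF C c] w by (simp_all add: algebra_simps)
    then show ?thesis using y unfolding fC_def by auto
  qed
  then show "w \<in> setminus_ominus (fC S \<psi> C y) (fC S \<psi> C x0)"
    unfolding setminus_ominus_def by blast
qed

lemma fC_neq_UNIV:
  assumes g: "g \<in> negdual C" "g \<noteq> (\<lambda>_. 0)"
  shows "fC S \<psi> C x \<noteq> UNIV"
proof
  assume f: "fC S \<psi> C x = UNIV"
  have "z \<in> C" for z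
  proof -
    have "\<psi> x + z \<in> fC S \<psi> C x" using f by simp
    then show "z \<in> C" unfolding fC_def by (auto split: if_splits)
  qed
  then have le: "g z \<le> 0" for z using g(1) unfolding negdual_def by auto
  have "linear g" using g(1) unfolding negdual_def dualsp_def by simp
  then have "g z = 0" for z using le[of z] le[of "- z"] linear_neg[of g z] by simp
  then show False using g(2) by auto
qed

lemma ereal_ominus_PInf: "ereal_ominus \<infinity> (ereal s) = \<infinity>"
  unfolding ereal_ominus_def inf_add_def by (simp add: top_ereal_def)

lemma ereal_ominus_ereal: "ereal_ominus (ereal a) (ereal s) = ereal (a - s)"
proof -
  have "{ereal t | t. ereal a \<le> inf_add (ereal s) (ereal t)} = {ereal t | t. a - s \<le> t}"
    unfolding inf_add_def by auto
  then show ?thesis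
    unfolding ereal_ominus_def by (auto intro!: antisym Inf_lower Inf_greatest)
qed

lemma phider_phiC_le:
  assumes "x0 \<in> S" "0 < t" "x0 + t *\<^sub>R u \<in> S"
  shows "phider (phiC S \<psi> g) x0 u \<le> ereal ((g (\<psi> x0) - g (\<psi> (x0 + t *\<^sub>R u))) / t)"
proof -
  have "phider (phiC S \<psi> g) x0 u
      \<le> ereal (1 / t) * ereal_ominus (phiC S \<psi> g (x0 + t *\<^sub>R u)) (phiC S \<psi> g x0)"
    unfolding phider_def using assms(2) by (intro INF_lower) simp
  then show ?thesis using assms by (simp add: phiC_def ereal_ominus_ereal diff_divide_distrib)
qed

lemma phider_phiC_greatest:
  assumes x0: "x0 \<in> S"
    and quotient: "\<And>t. 0 < t \<Longrightarrow> x0 + t *\<^sub>R u \<in> S \<Longrightarrow> b \<le> (g (\<psi> x0) - g (\<psi> (x0 + t *\<^sub>R u))) / t"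
  shows "ereal b \<le> phider (phiC S \<psi> g) x0 u"
  unfolding phider_def
proof (rule INF_greatest)
  fix t :: real assume "t \<in> {0<..}"
  then have t: "0 < t" by simp
  show "ereal b \<le> ereal (1 / t) * ereal_ominus (phiC S \<psi> g (x0 + t *\<^sub>R u)) (phiC S \<psi> g x0)"
  proof (cases "x0 + t *\<^sub>R u \<in> S")
    case False
    then show ?thesis using t x0 by (simp add: phiC_def ereal_ominus_PInf)
  next
    case True
    then show ?thesis
      using quotient[OF t True] t x0 by (simp add: phiC_def ereal_ominus_ereal diff_divide_distrib)
  qed
qed

lemma zero_notin_setder_fC_if_phider_pos:
  assumes C: "convex_cone C" and x0: "x0 \<in> S" and g: "g \<in> negdual C"
    and pos: "0 < phider (phiC S \<psi> g) x0 u"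
  shows "0 \<notin> setder (fC S \<psi> C) x0 u"
proof -
  have g_lin: "linear g" and g_cont: "continuous_on UNIV g" and g_C: "\<And>c. c \<in> C \<Longrightarrow> g c \<le> 0"
    using g unfolding negdual_def dualsp_def by auto
  obtain \<epsilon> where \<epsilon>: "0 < \<epsilon>" "ereal \<epsilon> < phider (phiC S \<psi> g) x0 u"
    using ereal_dense2[OF pos] by auto
  define H where "H = {z. g z \<le> - \<epsilon>}"
  have "closed H" unfolding H_def by (intro closed_Collect_le g_cont continuous_on_const)
  moreover have "convex H"
    using convex_linear_vimage[OF g_lin convex_real_interval(2)] unfolding H_def vimage_def by simp
  moreover have "(1 / t) *\<^sub>R w \<in> H"
    if t: "t \<in> {0<..<1}" and w: "w \<in> setminus_ominus (fC S \<psi> C (x0 + t *\<^sub>R u)) (fC S \<psi> C x0)"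
    for t w
  proof -
    obtain c where xt: "x0 + t *\<^sub>R u \<in> S" and c: "c \<in> C"
      and w_eq: "w = \<psi> (x0 + t *\<^sub>R u) - \<psi> x0 + c"
      using w unfolding setminus_ominus_fC[OF C x0] by (auto split: if_splits)
    have "ereal \<epsilon> < ereal ((g (\<psi> x0) - g (\<psi> (x0 + t *\<^sub>R u))) / t)"
      using order.strict_trans2[OF \<epsilon>(2) phider_phiC_le[OF x0 _ xt]] t by simp
    moreover have "g ((1 / t) *\<^sub>R w) = (g (\<psi> (x0 + t *\<^sub>R u)) - g (\<psi> x0)) / t + g c / t"
      unfolding w_eq by (simp add: linear_add[OF g_lin] linear_diff[OF g_lin] linear_scale[OF g_lin]
          add_divide_distrib)
    moreover have "g c / t \<le> 0" using g_C[OF c] t by (simp add: divide_nonpos_pos)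
    ultimately show ?thesis unfolding H_def by (simp add: diff_divide_distrib)
  qed
  ultimately have "closure (convex hull (\<Union>t\<in>{0<..<1}. (\<lambda>z. (1 / t) *\<^sub>R z) `
      setminus_ominus (fC S \<psi> C (x0 + t *\<^sub>R u)) (fC S \<psi> C x0))) \<subseteq> H"
    by (intro closure_minimal hull_minimal) auto
  moreover have "0 \<notin> H" using \<epsilon>(1) linear_0[OF g_lin] unfolding H_def by simp
  ultimately show ?thesis unfolding setder_def using zero_less_one by blast
qed

lemma zero_notin_setder_fC_separation:
  fixes \<psi> :: "'x::real_vector \<Rightarrow> 'z::{real_vector,t2_space}"
  assumes Z: "lctvs TYPE('z)" and C: "convex_cone C" and x0: "x0 \<in> S"
    and zero: "0 \<notin> setder (fC S \<psi> C) x0 u"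
  obtains h :: "'z \<Rightarrow> real" and t0 :: real
  where "linear h" "continuous_on UNIV h" "0 < t0"
    "\<And>t c. 0 < t \<Longrightarrow> t < t0 \<Longrightarrow> x0 + t *\<^sub>R u \<in> S \<Longrightarrow> c \<in> C \<Longrightarrow>
      1 \<le> (h (\<psi> (x0 + t *\<^sub>R u)) - h (\<psi> x0) + h c) / t"
proof -
  define Q where "Q t0 = (\<Union>t\<in>{0<..<t0}. (\<lambda>z. (1 / t) *\<^sub>R z) `
      setminus_ominus (fC S \<psi> C (x0 + t *\<^sub>R u)) (fC S \<psi> C x0))" for t0 :: real
  obtain t0 :: real where t0: "0 < t0" and Q_t0: "0 \<notin> closure (convex hull Q t0)"
    using zero unfolding setder_def Q_def by auto
  have V: "open (- closure (convex hull Q t0))" "0 \<in> - closure (convex hull Q t0)"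
    "- closure (convex hull Q t0) \<inter> convex hull Q t0 = {}"
    using Q_t0 closure_subset by auto
  obtain h :: "'z \<Rightarrow> real" where h: "linear h" "continuous_on UNIV h"
    and h_Q: "\<And>k. k \<in> convex hull Q t0 \<Longrightarrow> 1 \<le> h k"
    using lctvs_separate_convex_from_nbhd[OF Z convex_convex_hull V] by blast
  have "1 \<le> (h (\<psi> (x0 + t *\<^sub>R u)) - h (\<psi> x0) + h c) / t"
    if t: "0 < t" "t < t0" and xt: "x0 + t *\<^sub>R u \<in> S" and c: "c \<in> C" for t c
  proof -
    have "\<psi> (x0 + t *\<^sub>R u) - \<psi> x0 + c
        \<in> setminus_ominus (fC S \<psi> C (x0 + t *\<^sub>R u)) (fC S \<psi> C x0)"
      unfolding setminus_ominus_fC[OF C x0] using xt c by auto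
    then have "(1 / t) *\<^sub>R (\<psi> (x0 + t *\<^sub>R u) - \<psi> x0 + c) \<in> Q t0"
      unfolding Q_def using t by (intro UN_I[of t] imageI) auto
    then have "1 \<le> h ((1 / t) *\<^sub>R (\<psi> (x0 + t *\<^sub>R u) - \<psi> x0 + c))"
      by (intro h_Q hull_inc)
    then show ?thesis by (simp add: linear_add[OF h(1)] linear_diff[OF h(1)] linear_scale[OF h(1)])
  qed
  with h t0 show ?thesis using that by blast
qed

lemma phider_pos_if_zero_notin_setder_fC:
  fixes \<psi> :: "'x::real_vector \<Rightarrow> 'z::{real_vector,t2_space}"
  assumes Z: "lctvs TYPE('z)" and C: "convex_cone C" and psi: "C_convex S C \<psi>"
    and x0: "x0 \<in> S" and x: "x \<in> S" and zero: "0 \<notin> setder (fC S \<psi> C) x0 (x - x0)"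
  shows "\<exists>g\<in>negdual C - {\<lambda>_. 0}. 0 < phider (phiC S \<psi> g) x0 (x - x0)"
proof -
  define u where "u = x - x0"
  obtain h :: "'z \<Rightarrow> real" and t0 where h: "linear h" "continuous_on UNIV h" and t0: "0 < t0"
    and quotient_h: "\<And>t c. 0 < t \<Longrightarrow> t < t0 \<Longrightarrow> x0 + t *\<^sub>R u \<in> S \<Longrightarrow> c \<in> C \<Longrightarrow>
      1 \<le> (h (\<psi> (x0 + t *\<^sub>R u)) - h (\<psi> x0) + h c) / t"
    using zero_notin_setder_fC_separation[OF Z C x0 zero] unfolding u_def by blast
  define F where "F y = h (\<psi> y)" for y
  note quotient_ge = quotient_h[folded F_def]
  define t1 where "t1 = min (t0 / 2) 1"
  have t1: "0 < t1" "t1 < t0" "t1 \<le> 1" unfolding t1_def using t0 by auto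
  have S: "convex S" using psi unfolding C_convex_def by simp
  have x_t1: "x0 + t1 *\<^sub>R u \<in> S"
    unfolding u_def using convex_add_scaleR_diff_mem[OF S x0 x] t1 by simp
  have h_C: "0 \<le> h c" if "c \<in> C" for c
  proof (rule linear_nonneg_on_cone_if_bdd_below[OF h(1) C _ that])
    fix c assume "c \<in> C"
    then have "1 \<le> (F (x0 + t1 *\<^sub>R u) - F x0 + h c) / t1" by (intro quotient_ge t1 x_t1)
    then show "t1 - (F (x0 + t1 *\<^sub>R u) - F x0) \<le> h c" using t1(1) by (simp add: field_simps)
  qed
  have F_convex: "convex_on S F"
    unfolding F_def by (rule C_convex_scalarization_convex_on[OF psi h(1) h_C])
  have F_quotient: "1 \<le> (F (x0 + t *\<^sub>R u) - F x0) / t"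
    if "0 < t" "x0 + t *\<^sub>R u \<in> S" for t
    using convex_on_difference_quotient_ge[OF F_convex x0 t0 _ that]
      quotient_ge[OF _ _ _ convex_cone_contains_0[OF C]] linear_0[OF h(1)] by simp
  define g where "g z = - h z" for z
  have "linear g" unfolding g_def using linear_compose_neg[OF h(1)] by (simp add: o_def)
  moreover have "continuous_on UNIV g" unfolding g_def by (intro continuous_intros h(2))
  ultimately have "g \<in> negdual C" using h_C unfolding negdual_def dualsp_def g_def by auto
  moreover have "g \<noteq> (\<lambda>_. 0)"
  proof
    assume "g = (\<lambda>_. 0)"
    then have "h = (\<lambda>_. 0)" unfolding g_def by (metis minus_zero minus_minus)
    then show False
      using quotient_ge[OF t1(1,2) x_t1 convex_cone_contains_0[OF C]] t1 unfolding F_def by simp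
  qed
  moreover have "ereal 1 \<le> phider (phiC S \<psi> g) x0 u"
    using F_quotient unfolding F_def g_def by (intro phider_phiC_greatest[OF x0]) simp
  then have "0 < phider (phiC S \<psi> g) x0 u" by (rule order.strict_trans2[rotated]) simp
  ultimately show ?thesis unfolding u_def by blast
qed

section \<open>Efficiency\<close>

lemma lctvs_closed_negations:
  assumes "lctvs TYPE('z::{real_vector,t2_space})" and "closed (C::'z set)"
  shows "closed (uminus ` C)"
proof -
  have "uminus ` C = - {w. (- 1) *\<^sub>R w + 0 \<in> - C}" by (auto simp: image_iff) (metis minus_minus)
  moreover have "open {w. (- 1) *\<^sub>R w + 0 \<in> - C}"
    using assms by (intro lctvs_open_affine_vimage) auto
  ultimately show ?thesis by (simp add: closed_def)
qed

lemma linear_strip_basic_nbhd: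
  fixes h :: "'z::{real_vector,topological_space} \<Rightarrow> real"
  assumes h: "linear h" "continuous_on UNIV h" and r: "0 < r"
  shows "closed {w. \<bar>h w\<bar> \<le> r}" "convex {w. \<bar>h w\<bar> \<le> r}"
    "balanced_set {w. \<bar>h w\<bar> \<le> r}" "0 \<in> interior {w. \<bar>h w\<bar> \<le> r}"
proof -
  show "closed {w. \<bar>h w\<bar> \<le> r}" by (intro closed_Collect_le continuous_intros h(2))
  have "{w. \<bar>h w\<bar> \<le> r} = h -` {- r..r}" by auto
  then show "convex {w. \<bar>h w\<bar> \<le> r}" using convex_linear_vimage[OF h(1)] by simp
  show "balanced_set {w. \<bar>h w\<bar> \<le> r}"
    unfolding balanced_set_def
  proof (intro allI impI subsetI)
    fix a :: real and v assume a: "\<bar>a\<bar> \<le> 1" and "v \<in> (\<lambda>u. a *\<^sub>R u) ` {w. \<bar>h w\<bar> \<le> r}"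
    then obtain w where w: "\<bar>h w\<bar> \<le> r" "v = a *\<^sub>R w" by auto
    have "\<bar>a\<bar> * \<bar>h w\<bar> \<le> 1 * r" using a w(1) by (intro mult_mono) auto
    then show "v \<in> {w. \<bar>h w\<bar> \<le> r}" using w(2) by (simp add: linear_scale[OF h(1)] abs_mult)
  qed
  have "open {w. \<bar>h w\<bar> < r}" by (intro open_Collect_less continuous_intros h(2))
  moreover have "0 \<in> {w. \<bar>h w\<bar> < r}" using r linear_0[OF h(1)] by simp
  ultimately show "0 \<in> interior {w. \<bar>h w\<bar> \<le> r}"
    using interior_maximal[of "{w. \<bar>h w\<bar> < r}" "{w. \<bar>h w\<bar> \<le> r}"] by force
qed

lemma tilde_conv_fin_mem_closed_convex:
  fixes F :: "'z::{real_vector,t2_space} set"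
  assumes Z: "lctvs TYPE('z)" and F: "closed F" "convex F"
    and lim: "tilde_conv_fin q z" and ev: "\<forall>\<^sub>F i in sequentially. q i \<in> F"
  shows "z \<in> F"
proof (rule ccontr)
  assume z: "z \<notin> F"
  define K where "K = (+) (- z) ` F"
  have K_iff: "w \<in> K \<longleftrightarrow> z + w \<in> F" for w
    unfolding K_def by (auto simp: image_iff) (metis add.commute add_diff_cancel diff_add_cancel)
  have "convex K" unfolding K_def by (rule convex_translation[OF F(2)])
  moreover have "open (- K)"
  proof -
    have "- K = {w. 1 *\<^sub>R w + z \<in> - F}" using K_iff by (auto simp: add.commute)
    then show ?thesis using lctvs_open_affine_vimage[OF Z open_Compl[OF F(1)], of 1 z] by simp
  qed
  moreover have "0 \<in> - K" using z K_iff by simp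
  ultimately obtain h :: "'z \<Rightarrow> real" where h: "linear h" "continuous_on UNIV h"
    and h_K: "\<And>k. k \<in> K \<Longrightarrow> 1 \<le> h k"
    using lctvs_separate_convex_from_nbhd[OF Z, of K "- K"] by blast
  define U where "U = {w. \<bar>h w\<bar> \<le> 1 / 2}"
  have "\<forall>\<^sub>F i in sequentially. q i \<in> (\<lambda>u. z + u) ` U"
    using lim linear_strip_basic_nbhd[OF h, of "1 / 2"] unfolding tilde_conv_fin_def U_def by simp
  then have "\<forall>\<^sub>F i in sequentially. False"
    using ev
  proof eventually_elim
    case (elim i)
    then obtain w where "w \<in> U" "z + w \<in> F" by auto
    then show False using h_K[of w] K_iff unfolding U_def by auto
  qed
  then show False by simp
qed

lemma C_convex_difference_quotient_in_neg_cone: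
  assumes psi: "C_convex S C \<psi>" and C: "convex_cone C" and x0: "x0 \<in> S" and x: "x \<in> S"
    and c0: "c0 \<in> C" "\<psi> x0 = \<psi> x + c0" and \<tau>: "0 < \<tau>" "\<tau> \<le> 1"
  shows "(1 / \<tau>) *\<^sub>R (\<psi> (x0 + \<tau> *\<^sub>R (x - x0)) - \<psi> x0) \<in> uminus ` C"
proof -
  obtain c where c: "c \<in> C" "(1 - \<tau>) *\<^sub>R \<psi> x0 + \<tau> *\<^sub>R \<psi> x = \<psi> (x0 + \<tau> *\<^sub>R (x - x0)) + c"
    using C_convexD[OF psi x0 x, of \<tau>] \<tau> by auto
  have "\<psi> (x0 + \<tau> *\<^sub>R (x - x0)) - \<psi> x0 = (1 - \<tau>) *\<^sub>R \<psi> x0 + \<tau> *\<^sub>R \<psi> x - c - \<psi> x0"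
    using c(2) by (simp add: algebra_simps)
  also have "\<dots> = - (\<tau> *\<^sub>R c0 + c)"
    using c0(2) by (simp add: algebra_simps)
  finally have "(1 / \<tau>) *\<^sub>R (\<psi> (x0 + \<tau> *\<^sub>R (x - x0)) - \<psi> x0) = - (c0 + (1 / \<tau>) *\<^sub>R c)"
    using \<tau>(1) by (simp add: scaleR_add_right scaleR_diff_right)
  moreover have "c0 + (1 / \<tau>) *\<^sub>R c \<in> C"
    using \<tau>(1) by (intro convex_cone_add[OF C c0(1)] convex_cone_scaleR[OF C _ c(1)]) simp
  ultimately show ?thesis by (metis image_eqI)
qed

lemma Eff_pt_if_dini_fin_outside_neg_cone:
  fixes \<psi> :: "'x::real_vector \<Rightarrow> 'z::{real_vector,t2_space}"
  assumes Z: "lctvs TYPE('z)" and C: "closed_convex_cone C" "0 \<in> C"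
    and psi: "C_convex S C \<psi>" and x0: "x0 \<in> S"
    and dini: "\<And>x. x \<in> S \<Longrightarrow> \<psi> x \<noteq> \<psi> x0 \<Longrightarrow> \<exists>z\<in>dini_fin \<psi> x0 (x - x0). z \<notin> uminus ` C"
  shows "Eff_pt C (\<psi> ` S) (\<psi> x0)"
  unfolding Eff_pt_def
proof (intro conjI ballI impI)
  show "\<psi> x0 \<in> \<psi> ` S" using x0 by simp
  have C_cone: "convex_cone C" using C by (rule closed_convex_cone_imp_convex_cone)
  fix y assume "y \<in> \<psi> ` S" "\<psi> x0 \<in> {y + c | c. c \<in> C}"
  then obtain x c0 where x: "x \<in> S" "y = \<psi> x" and c0: "c0 \<in> C" "\<psi> x0 = \<psi> x + c0" by auto
  have "\<psi> x = \<psi> x0"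
  proof (rule ccontr)
    assume "\<psi> x \<noteq> \<psi> x0"
    then obtain z t where z: "z \<notin> uminus ` C" and t: "\<And>i. 0 < t i" "t \<longlonglongrightarrow> 0"
      and lim: "tilde_conv_fin (\<lambda>i. (1 / t i) *\<^sub>R (\<psi> (x0 + t i *\<^sub>R (x - x0)) - \<psi> x0)) z"
      using dini x unfolding dini_fin_def by blast
    have "\<forall>\<^sub>F i in sequentially. t i < 1" using order_tendstoD(2)[OF t(2)] by simp
    then have "\<forall>\<^sub>F i in sequentially. (1 / t i) *\<^sub>R (\<psi> (x0 + t i *\<^sub>R (x - x0)) - \<psi> x0) \<in> uminus ` C"
      by eventually_elim (use C_convex_difference_quotient_in_neg_cone[OF psi C_cone x0 x(1) c0] t(1) in auto)
    moreover have "closed (uminus ` C)"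
      using C(1) unfolding closed_convex_cone_def by (intro lctvs_closed_negations[OF Z]) simp
    moreover have "convex (uminus ` C)"
      using C(1) convex_negations unfolding closed_convex_cone_def by auto
    ultimately have "z \<in> uminus ` C" by (intro tilde_conv_fin_mem_closed_convex[OF Z _ _ lim])
    then show False using z by simp
  qed
  then show "\<psi> x0 \<in> {y + c | c. c \<in> C \<inter> uminus ` C}"
    using C(2) x(2) by (auto intro!: exI[of _ 0] image_eqI[of 0 uminus 0])
qed

theorem mainTheorem16:
  fixes S :: "'x::real_vector set" and \<psi> :: "'x \<Rightarrow> 'z::{real_vector,t2_space}"
    and C :: "'z set" and x0 :: 'x
  assumes Z: "lctvs TYPE('z)"
    and C: "closed_convex_cone C" "0 \<in> C" "negdual C - {\<lambda>_. 0} \<noteq> {}"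
    and psi: "C_convex S C \<psi>" and x0: "x0 \<in> S"
  shows
   "((fC S \<psi> C x0 = UNIV \<or>
       (\<forall>x\<in>S. fC S \<psi> C x \<noteq> fC S \<psi> C x0 \<longrightarrow> 0 \<notin> setder (fC S \<psi> C) x0 (x - x0)))
     \<longleftrightarrow>
     (fC S \<psi> C x0 = UNIV \<or>
       (\<forall>x\<in>S. fC S \<psi> C x \<noteq> fC S \<psi> C x0 \<longrightarrow>
          (\<exists>g\<in>negdual C - {\<lambda>_. 0}. 0 < phider (phiC S \<psi> g) x0 (x - x0)))))
    \<and>
    ((fC S \<psi> C x0 = UNIV \<or>
       (\<forall>x\<in>S. fC S \<psi> C x \<noteq> fC S \<psi> C x0 \<longrightarrow>
          (\<exists>g\<in>negdual C - {\<lambda>_. 0}. 0 < phider (phiC S \<psi> g) x0 (x - x0))))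
     \<longleftrightarrow>
     (\<forall>x\<in>S. fC S \<psi> C x0 \<noteq> fC S \<psi> C x \<longrightarrow>
          (\<exists>g\<in>negdual C - {\<lambda>_. 0}.
             (- \<infinity> = phiC S \<psi> g x0 \<and> phiC S \<psi> g x0 < phiC S \<psi> g x) \<or>
             0 < phider (phiC S \<psi> g) x0 (x - x0))))
    \<and>
    ((\<forall>x\<in>S. \<psi> x \<noteq> \<psi> x0 \<longrightarrow> (\<exists>z. z \<in> dini_fin \<psi> x0 (x - x0) \<and> z \<notin> uminus ` C))
       \<longrightarrow> Eff_pt C (\<psi> ` S) (\<psi> x0))"
proof -
  have C_cone: "convex_cone C" using C(1,2) by (rule closed_convex_cone_imp_convex_cone)
  obtain g0 where "g0 \<in> negdual C" "g0 \<noteq> (\<lambda>_. 0)" using C(3) by auto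
  then have f_x0: "fC S \<psi> C x0 \<noteq> UNIV" by (rule fC_neq_UNIV)
  have phi_x0: "phiC S \<psi> g x0 \<noteq> - \<infinity>" for g using x0 unfolding phiC_def by simp
  have setder_iff: "0 \<notin> setder (fC S \<psi> C) x0 (x - x0) \<longleftrightarrow>
      (\<exists>g\<in>negdual C - {\<lambda>_. 0}. 0 < phider (phiC S \<psi> g) x0 (x - x0))" if "x \<in> S" for x
    using phider_pos_if_zero_notin_setder_fC[OF Z C_cone psi x0 that]
      zero_notin_setder_fC_if_phider_pos[OF C_cone x0] by blast
  have "(\<forall>x\<in>S. \<psi> x \<noteq> \<psi> x0 \<longrightarrow> (\<exists>z. z \<in> dini_fin \<psi> x0 (x - x0) \<and> z \<notin> uminus ` C))
      \<longrightarrow> Eff_pt C (\<psi> ` S) (\<psi> x0)"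
    using Eff_pt_if_dini_fin_outside_neg_cone[OF Z C(1,2) psi x0] by blast
  then show ?thesis using setder_iff f_x0 phi_x0 by (auto simp: eq_commute)
qed

end
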